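(* Let $\nu\in(0,\infty)$ and $x\in\mathbb X$. The following are equivalent: (i) there is $c_1>0$ with $\gamma_x(r)\le c_1r^{-\nu}$ for all $r>0$; (ii) there is $c_2>0$ with $\|Ax-Ax_\alpha\|_{\mathbb Y}\le c_2\alpha^{\frac\nu{1+\nu}}$ for all $\alpha>0$ and all $x_\alpha\in R_\alpha(Ax)$. More precisely, (i) implies (ii) with $c_2=4c_1^{\frac1{1+\nu}}$, and (ii) implies (i) with $c_1=c_2^{1+\nu}$.
   Context: Standing setting: $\mathbb X$ real Banach space, $\tau$ a topology with $(\mathbb X,\tau)$ locally convex Hausdorff; $\mathcal R:\mathbb X\to(-\infty,\infty]$ proper convex with $\tau$-compact sublevel sets; $\mathbb Y$ real Hilbert space; $A:\mathbb X\to\mathbb Y$ linear, $\tau$-to-weak continuous. $R_\alpha(g):=\operatorname{argmin}_{x\in\mathrm{dom}(\mathcal R)}(\frac1{2\alpha}\|g-Ax\|_{\mathbb Y}^2+\mathcal R(x))$, $\varrho_1(z):=\sup\{\beta^{-1}\|Az-Az_\beta\|_{\mathbb Y}:\beta>0,z_\beta\in R_\beta(Az)\}$. For $r\ge0$, $B_r:=\{z\in\mathbb X:\varrho_1(z)\le r\}$ and $\gamma_x(r):=\inf_{z\in B_r}\|Ax-Az\|_{\mathbb Y}$. *)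

theory Defs
  imports "HOL-Analysis.Analysis"
begin

definition locally_convex_topology :: "('a::real_vector) topology \<Rightarrow> bool" where
  "locally_convex_topology T \<longleftrightarrow>
     topspace T = UNIV \<and>
     continuous_map (prod_topology T T) T (\<lambda>(x, y). x + y) \<and>
     continuous_map (prod_topology euclideanreal T) T (\<lambda>(c, x). c *\<^sub>R x) \<and>
     (\<forall>U x. openin T U \<and> x \<in> U \<longrightarrow> (\<exists>V. openin T V \<and> convex V \<and> x \<in> V \<and> V \<subseteq> U))"

definition weak_topology :: "('b::real_inner) topology" where
  "weak_topology = topology_generated_by {(\<lambda>y. y \<bullet> v) -` U | v U. open U}"

definition edom :: "('a \<Rightarrow> ereal) \<Rightarrow> 'a set" where
  "edom R = {x. R x < \<infinity>}"

definition proper_convex :: "('a::real_vector \<Rightarrow> ereal) \<Rightarrow> bool" where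
  "proper_convex R \<longleftrightarrow> (\<forall>x. R x \<noteq> -\<infinity>) \<and> edom R \<noteq> {} \<and>
     (\<forall>x y t. 0 < t \<and> t < 1 \<longrightarrow>
        R ((1 - t) *\<^sub>R x + t *\<^sub>R y) \<le> ereal (1 - t) * R x + ereal t * R y)"

definition tikh :: "('a \<Rightarrow> 'b::real_normed_vector) \<Rightarrow> ('a \<Rightarrow> ereal) \<Rightarrow> real \<Rightarrow> 'b \<Rightarrow> 'a set" where
  "tikh A R \<alpha> g =
     {x \<in> edom R. \<forall>z \<in> edom R.
        ereal ((norm (g - A x))\<^sup>2 / (2 * \<alpha>)) + R x \<le> ereal ((norm (g - A z))\<^sup>2 / (2 * \<alpha>)) + R z}"

definition rho1 :: "('a \<Rightarrow> 'b::real_normed_vector) \<Rightarrow> ('a \<Rightarrow> ereal) \<Rightarrow> 'a \<Rightarrow> ereal" where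
  "rho1 A R z = (SUP p \<in> {(\<beta>, z\<^sub>\<beta>). \<beta> > 0 \<and> z\<^sub>\<beta> \<in> tikh A R \<beta> (A z)}.
                    ereal (norm (A z - A (snd p)) / fst p))"

definition Bset :: "('a \<Rightarrow> 'b::real_normed_vector) \<Rightarrow> ('a \<Rightarrow> ereal) \<Rightarrow> real \<Rightarrow> 'a set" where
  "Bset A R r = {z. rho1 A R z \<le> ereal r}"

definition gamma :: "('a \<Rightarrow> 'b::real_normed_vector) \<Rightarrow> ('a \<Rightarrow> ereal) \<Rightarrow> 'a \<Rightarrow> real \<Rightarrow> ereal" where
  "gamma A R x r = (INF z \<in> Bset A R r. ereal (norm (A x - A z)))"

end

theory Submission
  imports Defs
begin

text \<open>A Tikhonov minimiser u for data y satisfies the variational inequality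
  R u - R w \<le> (y - A u) \<bullet> (A u - A w) / \<alpha>. Two consequences carry the proof: the map
  y \<mapsto> A u is nonexpansive, and \<rho>_1(u) \<le> \<parallel>y - A u\<parallel> / \<alpha>, so u itself lies in B_r for
  r = \<parallel>y - A u\<parallel> / \<alpha>. The latter gives (ii) \<Rightarrow> (i) once \<alpha> is chosen with
  c_2 \<alpha>^(\<nu>/(1+\<nu>)) = \<alpha> r. For (i) \<Rightarrow> (ii), choose r with \<alpha> r = c_1 r^(-\<nu>) and z \<in> B_r
  nearly realising \<gamma>_x(r); with z_\<alpha> \<in> R_\<alpha>(A z) the triangle inequality and nonexpansiveness give
  \<parallel>A x - A x_\<alpha>\<parallel> \<le> \<parallel>A x - A z\<parallel> + \<parallel>A z - A z_\<alpha>\<parallel> + \<parallel>A z_\<alpha> - A x_\<alpha>\<parallel> \<le> 2 \<parallel>A x - A z\<parallel> + \<alpha> r.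
  Minimisers exist because R has compact sublevel sets and the data term is weakly lower
  semicontinuous.\<close>

lemma nonpos_if_le_small_multiples:
  fixes d e :: real
  assumes "\<And>t. 0 < t \<Longrightarrow> t < 1 \<Longrightarrow> d \<le> t * e" and "0 \<le> e"
  shows "d \<le> 0"
proof (rule ccontr)
  assume "\<not> d \<le> 0"
  define t where "t = min (1/2) (d / (2 * (e + 1)))"
  have t: "0 < t" "t < 1" using \<open>\<not> d \<le> 0\<close> assms(2) by (auto simp: t_def)
  have "t * e \<le> d / (2 * (e + 1)) * e" using t assms(2) by (intro mult_right_mono) (auto simp: t_def)
  also have "\<dots> = d / 2 * (e / (e + 1))" by simp
  also have "\<dots> \<le> d / 2" using \<open>\<not> d \<le> 0\<close> assms(2) by (intro mult_left_le) simp_all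
  also have "\<dots> < d" using \<open>\<not> d \<le> 0\<close> by simp
  finally show False using assms(1)[OF t] by simp
qed

lemma le_if_mult_self_le:
  fixes x y :: real
  assumes "x * x \<le> x * y" and "0 \<le> y"
  shows "x \<le> y"
  using assms by (cases "x > 0") (auto intro: mult_left_le_imp_le)

lemma powr_balance:
  fixes \<alpha> r \<nu> :: real
  assumes "\<alpha> > 0" and "r > 0" and "\<nu> > -1"
  shows "(\<alpha> * r powr (1 + \<nu>)) * r powr (-\<nu>) = \<alpha> * r"
    and "(\<alpha> * r powr (1 + \<nu>)) powr (1 / (1 + \<nu>)) * \<alpha> powr (\<nu> / (1 + \<nu>)) = \<alpha> * r"
proof -
  have "r powr (1 + \<nu>) * r powr (-\<nu>) = r powr ((1 + \<nu>) + (-\<nu>))"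
    by (rule powr_add[symmetric])
  also have "\<dots> = r" using assms by simp
  finally show "(\<alpha> * r powr (1 + \<nu>)) * r powr (-\<nu>) = \<alpha> * r"
    by (metis mult.assoc)
  have "(\<alpha> * r powr (1 + \<nu>)) powr (1 / (1 + \<nu>)) = \<alpha> powr (1 / (1 + \<nu>)) * r"
    using assms by (simp add: powr_mult powr_powr)
  moreover have "\<alpha> powr (1 / (1 + \<nu>)) * \<alpha> powr (\<nu> / (1 + \<nu>)) = \<alpha>"
    using assms by (simp flip: powr_add add_divide_distrib)
  ultimately show "(\<alpha> * r powr (1 + \<nu>)) powr (1 / (1 + \<nu>)) * \<alpha> powr (\<nu> / (1 + \<nu>)) = \<alpha> * r"
    by (metis mult.commute mult.left_commute)
qed

lemma proper_convex_finite_on_edom: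
  assumes "proper_convex R" and "z \<in> edom R"
  shows "R z = ereal (real_of_ereal (R z))"
  using assms unfolding proper_convex_def edom_def by (cases "R z") auto

lemma tikh_in_edom: "u \<in> tikh A R \<alpha> y \<Longrightarrow> u \<in> edom R"
  unfolding tikh_def by auto

lemma tikh_le_along_segment:
  fixes A :: "'a::real_vector \<Rightarrow> 'b::real_inner"
  assumes pc: "proper_convex R" and lin: "linear A" and \<alpha>: "\<alpha> > 0"
    and u: "u \<in> tikh A R \<alpha> y" and w: "w \<in> edom R" and t: "0 < t" "t < 1"
  shows "real_of_ereal (R u) - real_of_ereal (R w) + ((y - A u) \<bullet> (A w - A u)) / \<alpha>
           \<le> t * ((norm (A w - A u))\<^sup>2 / (2 * \<alpha>))"
proof -
  define Ru Rw where "Ru = real_of_ereal (R u)" and "Rw = real_of_ereal (R w)"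
  have Ru: "R u = ereal Ru" and Rw: "R w = ereal Rw"
    using proper_convex_finite_on_edom[OF pc] tikh_in_edom[OF u] w by (simp_all add: Ru_def Rw_def)
  define a b where "a = y - A u" and "b = A w - A u"
  define wt where "wt = (1 - t) *\<^sub>R u + t *\<^sub>R w"
  have "R wt \<le> ereal (1 - t) * R u + ereal t * R w"
    using pc t unfolding proper_convex_def wt_def by blast
  hence conv: "R wt \<le> ereal ((1 - t) * Ru + t * Rw)" by (simp add: Ru Rw)
  hence wt_dom: "wt \<in> edom R" unfolding edom_def by (auto intro: le_less_trans)
  have wt_res: "y - A wt = a - t *\<^sub>R b"
    unfolding wt_def a_def b_def using lin by (simp add: linear_add linear_scale linear_diff algebra_simps)
  have "ereal ((norm (y - A u))\<^sup>2 / (2 * \<alpha>)) + R u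
      \<le> ereal ((norm (y - A wt))\<^sup>2 / (2 * \<alpha>)) + R wt"
    using u wt_dom unfolding tikh_def by blast
  hence "ereal ((norm a)\<^sup>2 / (2 * \<alpha>)) + ereal Ru
      \<le> ereal ((norm (a - t *\<^sub>R b))\<^sup>2 / (2 * \<alpha>)) + R wt"
    unfolding wt_res Ru a_def[symmetric] .
  also have "\<dots> \<le> ereal ((norm (a - t *\<^sub>R b))\<^sup>2 / (2 * \<alpha>)) + ereal ((1 - t) * Ru + t * Rw)"
    using conv by (rule add_left_mono)
  finally have "(norm a)\<^sup>2 / (2 * \<alpha>) + Ru
      \<le> (norm (a - t *\<^sub>R b))\<^sup>2 / (2 * \<alpha>) + ((1 - t) * Ru + t * Rw)"
    by simp
  moreover have "(norm (a - t *\<^sub>R b))\<^sup>2 = (norm a)\<^sup>2 - 2 * t * (a \<bullet> b) + t\<^sup>2 * (norm b)\<^sup>2"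
    unfolding power2_norm_eq_inner
    by (simp add: inner_diff_left inner_diff_right algebra_simps power2_eq_square inner_commute)
  moreover have "((norm a)\<^sup>2 - 2 * t * (a \<bullet> b) + t\<^sup>2 * (norm b)\<^sup>2) / (2 * \<alpha>) + ((1 - t) * Ru + t * Rw)
      - ((norm a)\<^sup>2 / (2 * \<alpha>) + Ru)
      = t * (t * ((norm b)\<^sup>2 / (2 * \<alpha>)) - (Ru - Rw + (a \<bullet> b) / \<alpha>))"
    using \<alpha> by (simp add: field_simps power2_eq_square)
  ultimately have "0 \<le> t * (t * ((norm b)\<^sup>2 / (2 * \<alpha>)) - (Ru - Rw + (a \<bullet> b) / \<alpha>))"
    by simp
  thus ?thesis using t by (simp add: zero_le_mult_iff Ru_def Rw_def a_def b_def)
qed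

lemma tikh_variational_inequality:
  fixes A :: "'a::real_vector \<Rightarrow> 'b::real_inner"
  assumes pc: "proper_convex R" and lin: "linear A" and \<alpha>: "\<alpha> > 0"
    and u: "u \<in> tikh A R \<alpha> y" and w: "w \<in> edom R"
  shows "real_of_ereal (R u) - real_of_ereal (R w) \<le> ((y - A u) \<bullet> (A u - A w)) / \<alpha>"
proof -
  have "real_of_ereal (R u) - real_of_ereal (R w) + ((y - A u) \<bullet> (A w - A u)) / \<alpha> \<le> 0"
    using tikh_le_along_segment[OF pc lin \<alpha> u w]
    by (rule nonpos_if_le_small_multiples) (use \<alpha> in \<open>auto intro: divide_nonneg_pos\<close>)
  moreover have "(y - A u) \<bullet> (A u - A w) = - ((y - A u) \<bullet> (A w - A u))"
    by (simp add: inner_diff_right)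
  ultimately show ?thesis by simp
qed

lemma tikh_nonexpansive:
  fixes A :: "'a::real_vector \<Rightarrow> 'b::real_inner"
  assumes pc: "proper_convex R" and lin: "linear A" and \<alpha>: "\<alpha> > 0"
    and u: "u \<in> tikh A R \<alpha> y" and w: "w \<in> tikh A R \<alpha> q"
  shows "norm (A u - A w) \<le> norm (y - q)"
proof -
  define d where "d = A u - A w"
  have "real_of_ereal (R u) - real_of_ereal (R w) \<le> ((y - A u) \<bullet> d) / \<alpha>"
    unfolding d_def by (rule tikh_variational_inequality[OF pc lin \<alpha> u tikh_in_edom[OF w]])
  moreover have "real_of_ereal (R w) - real_of_ereal (R u) \<le> ((q - A w) \<bullet> (- d)) / \<alpha>"
    using tikh_variational_inequality[OF pc lin \<alpha> w tikh_in_edom[OF u]] by (simp add: d_def)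
  ultimately have "0 \<le> ((y - A u) \<bullet> d + (q - A w) \<bullet> (- d)) / \<alpha>"
    unfolding add_divide_distrib by linarith
  hence "0 \<le> (y - A u) \<bullet> d + (q - A w) \<bullet> (- d)"
    using \<alpha> by (simp add: zero_le_divide_iff)
  also have "\<dots> = (y - q) \<bullet> d - (norm d)\<^sup>2"
    unfolding d_def power2_norm_eq_inner by (simp add: inner_diff_left inner_diff_right algebra_simps)
  finally have "norm d * norm d \<le> (y - q) \<bullet> d" by (simp add: power2_eq_square)
  also have "\<dots> \<le> norm d * norm (y - q)" by (metis norm_cauchy_schwarz mult.commute)
  finally show ?thesis unfolding d_def[symmetric] by (rule le_if_mult_self_le) simp
qed

lemma norm_tikh_of_tikh_le:
  fixes A :: "'a::real_vector \<Rightarrow> 'b::real_inner"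
  assumes pc: "proper_convex R" and lin: "linear A" and \<alpha>: "\<alpha> > 0" and \<beta>: "\<beta> > 0"
    and u: "u \<in> tikh A R \<alpha> y" and w: "w \<in> tikh A R \<beta> (A u)"
  shows "norm (A u - A w) \<le> \<beta> * (norm (y - A u) / \<alpha>)"
proof -
  define d where "d = A u - A w"
  have "real_of_ereal (R u) - real_of_ereal (R w) \<le> ((y - A u) \<bullet> d) / \<alpha>"
    unfolding d_def by (rule tikh_variational_inequality[OF pc lin \<alpha> u tikh_in_edom[OF w]])
  moreover have "real_of_ereal (R w) - real_of_ereal (R u) \<le> (d \<bullet> (- d)) / \<beta>"
    using tikh_variational_inequality[OF pc lin \<beta> w tikh_in_edom[OF u]] by (simp add: d_def)
  moreover have "((y - A u) \<bullet> d) / \<alpha> \<le> norm (y - A u) * norm d / \<alpha>"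
    using \<alpha> by (intro divide_right_mono norm_cauchy_schwarz) auto
  ultimately have "(norm d)\<^sup>2 / \<beta> \<le> norm d * (norm (y - A u) / \<alpha>)"
    by (simp add: power2_norm_eq_inner mult.commute)
  hence "norm d * norm d \<le> norm d * (\<beta> * (norm (y - A u) / \<alpha>))"
    using \<beta> by (simp add: field_simps power2_eq_square)
  thus ?thesis unfolding d_def[symmetric] by (rule le_if_mult_self_le) (use \<alpha> \<beta> in simp)
qed

lemma rho1_tikh_le:
  fixes A :: "'a::real_vector \<Rightarrow> 'b::real_inner"
  assumes pc: "proper_convex R" and lin: "linear A" and \<alpha>: "\<alpha> > 0"
    and u: "u \<in> tikh A R \<alpha> y"
  shows "rho1 A R u \<le> ereal (norm (y - A u) / \<alpha>)"
  unfolding rho1_def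
proof (rule SUP_least)
  fix p assume "p \<in> {(\<beta>, z\<^sub>\<beta>). \<beta> > 0 \<and> z\<^sub>\<beta> \<in> tikh A R \<beta> (A u)}"
  then obtain \<beta> w where p: "p = (\<beta>, w)" and \<beta>: "\<beta> > 0" and w: "w \<in> tikh A R \<beta> (A u)" by auto
  have "norm (A u - A w) \<le> \<beta> * (norm (y - A u) / \<alpha>)"
    by (rule norm_tikh_of_tikh_le[OF pc lin \<alpha> \<beta> u w])
  thus "ereal (norm (A u - A (snd p)) / fst p) \<le> ereal (norm (y - A u) / \<alpha>)"
    using p \<beta> by (simp add: divide_le_eq mult.commute)
qed

lemma rho1_ge:
  assumes "\<beta> > 0" and "w \<in> tikh A R \<beta> (A z)"
  shows "ereal (norm (A z - A w) / \<beta>) \<le> rho1 A R z"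
  unfolding rho1_def using assms by (intro SUP_upper2[of "(\<beta>, w)"]) auto

lemma norm_tikh_residual_le:
  fixes A :: "'a::real_vector \<Rightarrow> 'b::real_inner"
  assumes pc: "proper_convex R" and lin: "linear A" and \<alpha>: "\<alpha> > 0"
    and z: "z \<in> Bset A R r" and u: "u \<in> tikh A R \<alpha> (A x)" and w: "w \<in> tikh A R \<alpha> (A z)"
  shows "norm (A x - A u) \<le> 2 * norm (A x - A z) + \<alpha> * r"
proof -
  have "ereal (norm (A z - A w) / \<alpha>) \<le> ereal r"
    using order_trans[OF rho1_ge[OF \<alpha> w]] z unfolding Bset_def by blast
  hence zw: "norm (A z - A w) \<le> \<alpha> * r" using \<alpha> by (simp add: divide_le_eq mult.commute)
  have uw: "norm (A u - A w) \<le> norm (A x - A z)" by (rule tikh_nonexpansive[OF pc lin \<alpha> u w])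
  have "norm (A x - A u) \<le> norm (A x - A z) + norm (A z - A w) + norm (A w - A u)"
    using norm_diff_triangle_le[of "A x" "A z" _ "A w"] norm_diff_triangle_le[of "A x" "A w" _ "A u"]
    by (meson add_right_mono order.refl order_trans)
  thus ?thesis using zw uw by (simp add: norm_minus_commute)
qed

lemma topspace_weak_topology [simp]: "topspace (weak_topology :: 'b::real_inner topology) = UNIV"
proof -
  have "(UNIV :: 'b set) \<in> {(\<lambda>y. y \<bullet> v) -` U | v U. open U}"
    by (rule CollectI, rule exI[of _ 0], rule exI[of _ UNIV]) auto
  thus ?thesis unfolding weak_topology_def topology_generated_by_topspace by blast
qed

text \<open>The complement of a closed ball is the union of the open half-spaces
  {y. (y - g) \<bullet> v > \<rho>} over unit vectors v.\<close>
lemma openin_weak_topology_norm_gt: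
  fixes g :: "'b::real_inner"
  shows "openin weak_topology {y. \<rho> < norm (y - g)}"
proof (cases "\<rho> < 0")
  case True
  hence "\<rho> < norm (y - g)" for y using norm_ge_zero[of "y - g"] by linarith
  hence "{y. \<rho> < norm (y - g)} = topspace (weak_topology :: 'b topology)" by auto
  thus ?thesis by (metis openin_topspace)
next
  case False
  define H where "H v = (\<lambda>y. y \<bullet> v) -` {g \<bullet> v + \<rho> <..}" for v
  have "{y. \<rho> < norm (y - g)} = (\<Union>v \<in> {v. norm v = 1}. H v)"
  proof (intro equalityI subsetI)
    fix y assume y: "y \<in> {y. \<rho> < norm (y - g)}"
    define v where "v = (1 / norm (y - g)) *\<^sub>R (y - g)"
    have pos: "norm (y - g) > 0" using y False by auto
    hence "norm v = 1" by (simp add: v_def)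
    moreover have "(y - g) \<bullet> v = norm (y - g)"
      using pos by (simp add: v_def dot_square_norm power2_eq_square)
    hence "y \<in> H v" using y by (simp add: H_def inner_diff_left)
    ultimately show "y \<in> (\<Union>v \<in> {v. norm v = 1}. H v)" by blast
  next
    fix y assume "y \<in> (\<Union>v \<in> {v. norm v = 1}. H v)"
    then obtain v where "norm v = 1" and "\<rho> < (y - g) \<bullet> v"
      by (auto simp: H_def inner_diff_left)
    thus "y \<in> {y. \<rho> < norm (y - g)}"
      using norm_cauchy_schwarz[of "y - g" v] by simp
  qed
  moreover have "openin weak_topology (H v)" for v
  proof -
    have "H v \<in> {(\<lambda>y. y \<bullet> v) -` U | v U. open U}"
      unfolding H_def using open_greaterThan by blast
    thus ?thesis unfolding weak_topology_def by (rule topology_generated_by_Basis)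
  qed
  ultimately show ?thesis by (metis (no_types, lifting) imageE openin_Union)
qed
lemma openin_tikh_data_term_gt:
  fixes \<tau> :: "'a topology" and A :: "'a \<Rightarrow> 'b::real_inner"
  assumes top: "topspace \<tau> = UNIV" and cont: "continuous_map \<tau> weak_topology A" and \<alpha>: "\<alpha> > 0"
  shows "openin \<tau> {z. q < (norm (g - A z))\<^sup>2 / (2 * \<alpha>)}"
proof -
  define \<rho> where "\<rho> = (if q < 0 then -1 else sqrt (2 * \<alpha> * q))"
  have "q < (norm (g - A z))\<^sup>2 / (2 * \<alpha>) \<longleftrightarrow> \<rho> < norm (A z - g)" for z
  proof (cases "q < 0")
    case False
    have "q < (norm (g - A z))\<^sup>2 / (2 * \<alpha>) \<longleftrightarrow> sqrt (2 * \<alpha> * q) < sqrt ((norm (A z - g))\<^sup>2)"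
      using \<alpha> by (simp only: real_sqrt_less_iff) (simp add: norm_minus_commute field_simps)
    thus ?thesis using False by (simp add: \<rho>_def)
  next
    case True
    have "q < (norm (g - A z))\<^sup>2 / (2 * \<alpha>)" using True \<alpha> by (simp add: less_le_trans)
    moreover have "-1 < norm (A z - g)" using norm_ge_zero[of "A z - g"] by linarith
    ultimately show ?thesis using True by (simp add: \<rho>_def)
  qed
  hence "{z. q < (norm (g - A z))\<^sup>2 / (2 * \<alpha>)} = {z \<in> topspace \<tau>. A z \<in> {y. \<rho> < norm (y - g)}}"
    using top by auto
  thus ?thesis using openin_continuous_map_preimage[OF cont openin_weak_topology_norm_gt] by simp
qed

lemma openin_superlevel_if_compactin_sublevel:
  fixes f :: "'a \<Rightarrow> ereal"
  assumes "Hausdorff_space X" and "topspace X = UNIV" and "\<And>c. compactin X {z. f z \<le> ereal c}"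
  shows "openin X {z. ereal s < f z}"
proof -
  have "closedin X {z. f z \<le> ereal s}" by (rule compactin_imp_closedin[OF assms(1,3)])
  moreover have "{z. ereal s < f z} = topspace X - {z. f z \<le> ereal s}" using assms(2) by auto
  ultimately show ?thesis by auto
qed

lemma openin_superlevel_add:
  fixes a :: "'a \<Rightarrow> real" and f :: "'a \<Rightarrow> ereal"
  assumes "\<And>q. openin X {z. q < a z}" and "\<And>s. openin X {z. ereal s < f z}"
    and "\<And>z. f z \<noteq> -\<infinity>"
  shows "openin X {z. ereal t < ereal (a z) + f z}"
proof -
  have "{z. ereal t < ereal (a z) + f z} = (\<Union>q. {z. q < a z} \<inter> {z. ereal (t - q) < f z})"
  proof (intro equalityI subsetI)
    fix z assume z: "z \<in> {z. ereal t < ereal (a z) + f z}"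
    show "z \<in> (\<Union>q. {z. q < a z} \<inter> {z. ereal (t - q) < f z})"
    proof (cases "f z")
      case (real r)
      hence "a z - (a z + r - t) / 2 < a z \<and> ereal (t - (a z - (a z + r - t) / 2)) < f z"
        using z by (simp add: field_simps)
      thus ?thesis by blast
    next
      case PInf
      hence "a z - 1 < a z \<and> ereal (t - (a z - 1)) < f z" by simp
      thus ?thesis by blast
    qed (use assms(3) in simp)
  next
    fix z assume "z \<in> (\<Union>q. {z. q < a z} \<inter> {z. ereal (t - q) < f z})"
    then obtain q where "q < a z" "ereal (t - q) < f z" by auto
    thus "z \<in> {z. ereal t < ereal (a z) + f z}" by (cases "f z") auto
  qed
  thus ?thesis using assms(1,2) by (auto intro!: openin_Union openin_Int)
qed

text \<open>The sublevel sets above the infimum have the finite intersection property inside the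
  compact one.\<close>
lemma ereal_attains_Inf_if_compactin_sublevel:
  fixes F :: "'a \<Rightarrow> ereal"
  assumes closed: "\<And>t. closedin X {z. F z \<le> ereal t}"
    and compact: "compactin X {z. F z \<le> F z0}"
  shows "\<exists>u. \<forall>z. F u \<le> F z"
proof -
  define m where "m = (INF z. F z)"
  define K where "K = {z. F z \<le> F z0}"
  define \<U> where "\<U> = (\<lambda>t. {z. F z \<le> ereal t}) ` {t. m < ereal t}"
  have "K \<inter> \<Inter>\<F> \<noteq> {}" if fin: "finite \<F>" and sub: "\<F> \<subseteq> \<U>" for \<F>
  proof -
    obtain T where T: "finite T" "T \<subseteq> {t. m < ereal t}" "\<F> = (\<lambda>t. {z. F z \<le> ereal t}) ` T"
      using fin sub unfolding \<U>_def by (meson finite_subset_image)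
    show ?thesis
    proof (cases "T = {}")
      case True
      thus ?thesis using T by (auto simp: K_def)
    next
      case False
      have "Min T \<in> T" using T False by simp
      hence "(INF z. F z) < ereal (Min T)" using T by (auto simp: m_def)
      then obtain z where z: "F z < ereal (Min T)" by (auto simp: INF_less_iff)
      define z' where "z' = (if F z \<le> F z0 then z else z0)"
      have "F z' \<le> F z0" and "F z' \<le> F z" by (auto simp: z'_def)
      have "F z' \<le> ereal t" if "t \<in> T" for t
      proof -
        have "Min T \<le> t" using T that by simp
        thus ?thesis using \<open>F z' \<le> F z\<close> z by (meson ereal_less_eq(3) less_imp_le order_trans)
      qed
      hence "z' \<in> K \<inter> \<Inter>\<F>" using T(3) \<open>F z' \<le> F z0\<close> by (auto simp: K_def)
      thus ?thesis by blast
    qed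
  qed
  moreover have "\<forall>C\<in>\<U>. closedin X C" using closed unfolding \<U>_def by auto
  ultimately obtain u where "u \<in> \<Inter>\<U>"
    using compact unfolding K_def[symmetric] compactin_fip by blast
  hence u_le: "F u \<le> ereal t" if "m < ereal t" for t using that unfolding \<U>_def by blast
  have "F u \<le> m"
  proof (rule ccontr)
    assume "\<not> F u \<le> m"
    then obtain t where "m < ereal t" and "ereal t < F u" using ereal_dense2 not_le by metis
    thus False using u_le by (simp add: not_le[symmetric])
  qed
  moreover have "m \<le> F z" for z unfolding m_def by (rule INF_lower) simp
  ultimately show ?thesis by (blast intro: order_trans)
qed

lemma tikh_nonempty:
  fixes \<tau> :: "'a::real_vector topology" and A :: "'a \<Rightarrow> 'b::real_inner"
  assumes hd: "Hausdorff_space \<tau>" and top: "topspace \<tau> = UNIV"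
    and pc: "proper_convex R" and cpt: "\<And>c. compactin \<tau> {z. R z \<le> ereal c}"
    and cont: "continuous_map \<tau> weak_topology A" and \<alpha>: "\<alpha> > 0"
  shows "tikh A R \<alpha> g \<noteq> {}"
proof -
  define a where "a z = (norm (g - A z))\<^sup>2 / (2 * \<alpha>)" for z
  define F where "F z = ereal (a z) + R z" for z
  have R_not_MInf: "R z \<noteq> -\<infinity>" for z using pc unfolding proper_convex_def by simp
  have "openin \<tau> {z. q < a z}" for q
    unfolding a_def by (rule openin_tikh_data_term_gt[OF top cont \<alpha>])
  hence "openin \<tau> {z. ereal t < F z}" for t unfolding F_def
    by (intro openin_superlevel_add openin_superlevel_if_compactin_sublevel[OF hd top cpt] R_not_MInf)
  hence closedF: "closedin \<tau> {z. F z \<le> ereal t}" for t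
    using top by (simp add: closedin_def set_diff_eq not_le)
  obtain z0 where z0: "z0 \<in> edom R" using pc unfolding proper_convex_def by auto
  define c0 where "c0 = a z0 + real_of_ereal (R z0)"
  have Fz0: "F z0 = ereal c0"
    using proper_convex_finite_on_edom[OF pc z0] unfolding F_def c0_def by (metis plus_ereal.simps(1))
  have R_le_F: "R z \<le> F z" for z
    using \<alpha> by (cases "R z") (auto simp: F_def a_def)
  have "compactin \<tau> {z. F z \<le> F z0}"
    unfolding Fz0 by (rule closed_compactin[OF cpt[of c0] _ closedF]) (auto intro: order_trans R_le_F)
  then obtain u where u: "\<And>z. F u \<le> F z"
    using ereal_attains_Inf_if_compactin_sublevel[OF closedF] by blast
  have "R u \<le> ereal c0" using order_trans[OF R_le_F u] Fz0 by metis
  hence "u \<in> edom R" unfolding edom_def by (cases "R u") auto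
  hence "u \<in> tikh A R \<alpha> g" using u unfolding tikh_def F_def a_def by auto
  thus ?thesis by blast
qed

lemma tikh_rate_if_gamma_rate:
  fixes A :: "'a::real_vector \<Rightarrow> 'b::real_inner"
  assumes pc: "proper_convex R" and lin: "linear A"
    and ex: "\<And>\<alpha> g. \<alpha> > 0 \<Longrightarrow> tikh A R \<alpha> g \<noteq> {}"
    and \<nu>: "\<nu> > 0" and c: "c > 0" and rate: "\<And>r. r > 0 \<Longrightarrow> gamma A R x r \<le> ereal (c * r powr (-\<nu>))"
    and \<alpha>: "\<alpha> > 0" and u: "u \<in> tikh A R \<alpha> (A x)"
  shows "norm (A x - A u) \<le> 4 * c powr (1 / (1 + \<nu>)) * \<alpha> powr (\<nu> / (1 + \<nu>))"
proof -
  have \<nu>': "\<nu> > -1" using \<nu> by simp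
  define r where "r = (c / \<alpha>) powr (1 / (1 + \<nu>))"
  have r: "r > 0" using c \<alpha> by (simp add: r_def)
  have c_eq: "c = \<alpha> * r powr (1 + \<nu>)" using c \<alpha> \<nu> by (simp add: r_def powr_powr)
  have "gamma A R x r \<le> ereal (\<alpha> * r)"
    using rate[OF r] powr_balance(1)[OF \<alpha> r \<nu>'] by (simp add: c_eq)
  \<comment> \<open>the constant 4 = 2 \<cdot> 3/2 + 1 comes from approximating the infimum within a factor 3/2\<close>
  also have "\<dots> < ereal (3 / 2 * (\<alpha> * r))" using \<alpha> r by simp
  finally obtain z where z: "z \<in> Bset A R r" and xz: "norm (A x - A z) < 3 / 2 * (\<alpha> * r)"
    unfolding gamma_def by (auto simp: INF_less_iff)
  obtain w where w: "w \<in> tikh A R \<alpha> (A z)" using ex[OF \<alpha>] by blast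
  have "norm (A x - A u) \<le> 2 * norm (A x - A z) + \<alpha> * r"
    by (rule norm_tikh_residual_le[OF pc lin \<alpha> z u w])
  also have "\<dots> \<le> 4 * (\<alpha> * r)" using xz by simp
  also have "\<alpha> * r = c powr (1 / (1 + \<nu>)) * \<alpha> powr (\<nu> / (1 + \<nu>))"
    using powr_balance(2)[OF \<alpha> r \<nu>'] by (simp add: c_eq)
  finally show ?thesis by simp
qed

lemma gamma_rate_if_tikh_rate:
  fixes A :: "'a::real_vector \<Rightarrow> 'b::real_inner"
  assumes pc: "proper_convex R" and lin: "linear A"
    and ex: "\<And>\<alpha> g. \<alpha> > 0 \<Longrightarrow> tikh A R \<alpha> g \<noteq> {}"
    and \<nu>: "\<nu> > 0" and c: "c > 0"
    and rate: "\<And>\<alpha> u. \<alpha> > 0 \<Longrightarrow> u \<in> tikh A R \<alpha> (A x) \<Longrightarrow>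
                 norm (A x - A u) \<le> c * \<alpha> powr (\<nu> / (1 + \<nu>))"
    and r: "r > 0"
  shows "gamma A R x r \<le> ereal (c powr (1 + \<nu>) * r powr (-\<nu>))"
proof -
  have \<nu>': "\<nu> > -1" using \<nu> by simp
  define \<alpha> where "\<alpha> = (c / r) powr (1 + \<nu>)"
  have \<alpha>: "\<alpha> > 0" using c r by (simp add: \<alpha>_def)
  have c_pow_eq: "c powr (1 + \<nu>) = \<alpha> * r powr (1 + \<nu>)"
    using c r by (simp add: \<alpha>_def powr_divide)
  moreover have "c = (c powr (1 + \<nu>)) powr (1 / (1 + \<nu>))"
    using c \<nu> by (simp add: powr_powr)
  ultimately have "c = (\<alpha> * r powr (1 + \<nu>)) powr (1 / (1 + \<nu>))" by simp
  hence bal: "c * \<alpha> powr (\<nu> / (1 + \<nu>)) = \<alpha> * r" using powr_balance(2)[OF \<alpha> r \<nu>'] by simp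
  obtain u where u: "u \<in> tikh A R \<alpha> (A x)" using ex[OF \<alpha>] by blast
  have res: "norm (A x - A u) \<le> \<alpha> * r" using rate[OF \<alpha> u] bal by simp
  have "rho1 A R u \<le> ereal (norm (A x - A u) / \<alpha>)" by (rule rho1_tikh_le[OF pc lin \<alpha> u])
  also have "\<dots> \<le> ereal r" using res \<alpha> by (simp add: divide_le_eq mult.commute)
  finally have "u \<in> Bset A R r" unfolding Bset_def by simp
  hence "gamma A R x r \<le> ereal (norm (A x - A u))" unfolding gamma_def by (rule INF_lower)
  also have "\<dots> \<le> ereal (\<alpha> * r)" using res by simp
  also have "\<alpha> * r = c powr (1 + \<nu>) * r powr (-\<nu>)"
    unfolding c_pow_eq by (rule powr_balance(1)[OF \<alpha> r \<nu>', symmetric])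
  finally show ?thesis .
qed

theorem proposition4p9:
  fixes \<tau> :: "('a::banach) topology"
    and R :: "'a \<Rightarrow> ereal"
    and A :: "'a \<Rightarrow> 'b::{real_inner, complete_space}"
    and \<nu> :: real and x :: 'a
  assumes "locally_convex_topology \<tau>" and "Hausdorff_space \<tau>"
    and "proper_convex R"
    and "\<And>c. compactin \<tau> {z. R z \<le> ereal c}"
    and "linear A"
    and "continuous_map \<tau> weak_topology A"
    and "\<nu> > 0"
  shows "((\<exists>c\<^sub>1>0. \<forall>r>0. gamma A R x r \<le> ereal (c\<^sub>1 * r powr (-\<nu>)))
          \<longleftrightarrow> (\<exists>c\<^sub>2>0. \<forall>\<alpha>>0. \<forall>x\<^sub>\<alpha> \<in> tikh A R \<alpha> (A x).
                 norm (A x - A x\<^sub>\<alpha>) \<le> c\<^sub>2 * \<alpha> powr (\<nu> / (1 + \<nu>))))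
    \<and> (\<forall>c\<^sub>1>0. (\<forall>r>0. gamma A R x r \<le> ereal (c\<^sub>1 * r powr (-\<nu>))) \<longrightarrow>
          (\<forall>\<alpha>>0. \<forall>x\<^sub>\<alpha> \<in> tikh A R \<alpha> (A x).
             norm (A x - A x\<^sub>\<alpha>) \<le> (4 * c\<^sub>1 powr (1 / (1 + \<nu>))) * \<alpha> powr (\<nu> / (1 + \<nu>))))
    \<and> (\<forall>c\<^sub>2>0. (\<forall>\<alpha>>0. \<forall>x\<^sub>\<alpha> \<in> tikh A R \<alpha> (A x).
             norm (A x - A x\<^sub>\<alpha>) \<le> c\<^sub>2 * \<alpha> powr (\<nu> / (1 + \<nu>))) \<longrightarrow>
          (\<forall>r>0. gamma A R x r \<le> ereal (c\<^sub>2 powr (1 + \<nu>) * r powr (-\<nu>))))"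
proof -
  define Gam where "Gam c \<longleftrightarrow> (\<forall>r>0. gamma A R x r \<le> ereal (c * r powr (-\<nu>)))" for c
  define Res where "Res c \<longleftrightarrow> (\<forall>\<alpha>>0. \<forall>x\<^sub>\<alpha> \<in> tikh A R \<alpha> (A x).
                                   norm (A x - A x\<^sub>\<alpha>) \<le> c * \<alpha> powr (\<nu> / (1 + \<nu>)))" for c
  have "topspace \<tau> = UNIV" using assms(1) unfolding locally_convex_topology_def by simp
  hence ex: "\<And>\<alpha> g. \<alpha> > 0 \<Longrightarrow> tikh A R \<alpha> g \<noteq> {}"
    using tikh_nonempty[OF assms(2) _ assms(3,4,6)] by blast
  have i_ii: "Res (4 * c powr (1 / (1 + \<nu>)))" if "c > 0" "Gam c" for c
    using tikh_rate_if_gamma_rate[OF assms(3,5) ex assms(7) that(1)] that(2)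
    unfolding Gam_def Res_def by blast
  have ii_i: "Gam (c powr (1 + \<nu>))" if "c > 0" "Res c" for c
    using gamma_rate_if_tikh_rate[OF assms(3,5) ex assms(7) that(1)] that(2)
    unfolding Gam_def Res_def by blast
  have "(\<exists>c>0. Gam c) \<longleftrightarrow> (\<exists>c>0. Res c)"
  proof
    assume "\<exists>c>0. Gam c"
    then obtain c where "c > 0" "Gam c" by blast
    thus "\<exists>c>0. Res c" using i_ii by (intro exI[of _ "4 * c powr (1 / (1 + \<nu>))"]) simp
  next
    assume "\<exists>c>0. Res c"
    then obtain c where "c > 0" "Res c" by blast
    thus "\<exists>c>0. Gam c" using ii_i by (intro exI[of _ "c powr (1 + \<nu>)"]) simp
  qed
  thus ?thesis using i_ii ii_i unfolding Gam_def Res_def by blast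
qed

end
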